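(* Let $\Lambda<0$, $M>0$, $\ell\ge2$, and on the static region $r>r_h$ of Schwarzschild–anti de Sitter use the tortoise coordinate $r^*=-\int_r^\infty dr'/f(r')\in(-\infty,0)$. Then $$\phi(t,r^* )=\frac{r\,e^{w_\ell(r^*+t)}}{(\ell+2)(\ell-1)r+6M}$$ solves the Zerilli equation $(\partial_t^2-\partial_{r^*}^2+fV^Z_\ell)\phi=0$, belongs to $L^2((-\infty,0),dr^* )$ for every $t$, grows exponentially in $t$, and satisfies the Robin boundary condition $\partial_{r^*}\phi|_{r^*=0}=\tan(\alpha)\,\phi|_{r^*=0}$ with $\tan\alpha=w_\ell-\frac{2M\Lambda}{(\ell-1)(\ell+2)}$. Hence, for the dynamics defined by the self-adjoint extension of $-\partial_{r^*}^2+fV^Z_\ell$ with this boundary condition, the SAdS black hole is linearly unstable.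
   Context: $f=1-\frac{2M}{r}-\frac{\Lambda r^2}{3}$ with single positive root $r_h$; $w_\ell=\frac{1}{12M}\frac{(\ell+2)!}{(\ell-2)!}$; $\mu=(\ell-1)(\ell+2)$; Zerilli potential $V^Z_\ell=\frac{[\mu^2\ell(\ell+1)-24M^2\Lambda]r^3+6\mu^2Mr^2+36\mu M^2r+72M^3}{r^3(6M+\mu r)^2}$. The Robin condition (for $\alpha\in[-\pi,\pi]$) defines a self-adjoint extension of $-\partial_{r^*}^2+fV^Z_\ell$ on $C^\infty_0((-\infty,0))$ in $L^2((-\infty,0),dr^* )$, and the evolution is $\partial_t^2\phi+{}^\alpha\mathcal H\phi=0$ in that domain. *)

theory Defs
  imports "HOL-Analysis.Analysis"
begin

definition fSAdS :: "real \<Rightarrow> real \<Rightarrow> real \<Rightarrow> real" where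
  "fSAdS M \<Lambda> r = 1 - 2 * M / r - \<Lambda> * r ^ 2 / 3"

definition horizon :: "real \<Rightarrow> real \<Rightarrow> real" where
  "horizon M \<Lambda> = (THE r. r > 0 \<and> fSAdS M \<Lambda> r = 0)"

definition tortoise :: "real \<Rightarrow> real \<Rightarrow> real \<Rightarrow> real" where
  "tortoise M \<Lambda> r = - integral {r..} (\<lambda>s. 1 / fSAdS M \<Lambda> s)"

definition rOf :: "real \<Rightarrow> real \<Rightarrow> real \<Rightarrow> real" where
  "rOf M \<Lambda> x = (THE r. r > horizon M \<Lambda> \<and> tortoise M \<Lambda> r = x)"

definition wl :: "real \<Rightarrow> nat \<Rightarrow> real" where
  "wl M l = (1 / (12 * M)) * (fact (l + 2) / fact (l - 2))"

definition mul :: "nat \<Rightarrow> real" where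
  "mul l = (real l - 1) * (real l + 2)"

definition VZ :: "real \<Rightarrow> real \<Rightarrow> nat \<Rightarrow> real \<Rightarrow> real" where
  "VZ M \<Lambda> l r =
     (((mul l)^2 * (real l * (real l + 1)) - 24 * M^2 * \<Lambda>) * r^3
       + 6 * (mul l)^2 * M * r^2 + 36 * mul l * M^2 * r + 72 * M^3)
     / (r^3 * (6 * M + mul l * r)^2)"

definition phiSol :: "real \<Rightarrow> real \<Rightarrow> nat \<Rightarrow> real \<Rightarrow> real \<Rightarrow> real" where
  "phiSol M \<Lambda> l t x =
     rOf M \<Lambda> x * exp (wl M l * (x + t)) / ((real l + 2) * (real l - 1) * rOf M \<Lambda> x + 6 * M)"

end

theory Submission
  imports Defs "HOL-Real_Asymp.Real_Asymp"
begin

text \<open>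
  The cubic \<open>r f(r) = r - 2M - \<Lambda> r\<^sup>3/3\<close> is strictly increasing when \<open>\<Lambda> < 0\<close>, so \<open>f\<close> has a
  single, simple, positive root \<open>r\<^sub>h\<close> and grows like \<open>r\<^sup>2\<close> at infinity.  Thus \<open>1/f\<close> diverges
  logarithmically at \<open>r\<^sub>h\<close> and is integrable at infinity, and the tortoise coordinate maps
  \<open>(r\<^sub>h, \<infinity>)\<close> increasingly and diffeomorphically onto \<open>(-\<infinity>, 0)\<close>, with \<open>dr/dr\<^sup>* = f\<close>.

  For \<open>G(r) = r/(\<mu> r + 6M)\<close> one checks the rational identity \<open>(f G')' + 2w G' = V G\<close>; since
  \<open>\<partial>\<^sub>r\<^sub>* = f \<partial>\<^sub>r\<close>, this says exactly that \<open>G(r) exp(w (r\<^sup>* + t))\<close> solves the Zerilli equation.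
  As \<open>0 < G \<le> 1/\<mu>\<close>, the mode is dominated by \<open>exp(w r\<^sup>*)/\<mu>\<close> and hence square integrable,
  and as \<open>r\<^sup>* \<rightarrow> 0\<close> (that is, \<open>r \<rightarrow> \<infinity>\<close>) its value and its \<open>r\<^sup>*\<close>-derivative tend to
  \<open>exp(w t)/\<mu>\<close> and \<open>(w/\<mu> - 2M\<Lambda>/\<mu>\<^sup>2) exp(w t)\<close>, whose ratio is the Robin constant.
\<close>

lemma has_integral_inverse_square_to_inf:
  fixes r c :: real
  assumes "r > 0"
  shows "((\<lambda>s. c * (1 / s\<^sup>2)) has_integral c / r) {r..}"
  using has_integral_mult_right[OF has_integral_inverse_power_to_inf[of 2 r], of c] assms by simp

section \<open>The static region of Schwarzschild--anti de Sitter\<close>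

locale schwarzschild_ads =
  fixes M \<Lambda> :: real
  assumes cosmological_neg: "\<Lambda> < 0" and mass_pos: "M > 0"
begin

abbreviation "f \<equiv> fSAdS M \<Lambda>"
abbreviation "rh \<equiv> horizon M \<Lambda>"

text \<open>The divided difference of the cubic \<open>r f(r)\<close>.\<close>
definition cubic_slope :: "real \<Rightarrow> real \<Rightarrow> real" where
  "cubic_slope a b = 1 - \<Lambda> / 3 * (a\<^sup>2 + a * b + b\<^sup>2)"

lemma cubic_slope_ge_1: "cubic_slope a b \<ge> 1"
proof -
  have "a\<^sup>2 + a * b + b\<^sup>2 = (a + b / 2)\<^sup>2 + 3 / 4 * b\<^sup>2"
    by (simp add: power2_eq_square algebra_simps)
  also have "\<dots> \<ge> 0" by simp
  finally show ?thesis
    using cosmological_neg unfolding cubic_slope_def by (simp add: mult_nonpos_nonneg)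
qed

lemma cubic_slope_mono: "0 \<le> s \<Longrightarrow> s \<le> t \<Longrightarrow> 0 \<le> a \<Longrightarrow> cubic_slope a s \<le> cubic_slope a t"
  unfolding cubic_slope_def using cosmological_neg
  by (intro diff_left_mono mult_left_mono_neg add_mono mult_left_mono power_mono) auto

lemma cubic_diff:
  "(b - 2 * M - \<Lambda> * b ^ 3 / 3) - (a - 2 * M - \<Lambda> * a ^ 3 / 3) = (b - a) * cubic_slope a b"
  unfolding cubic_slope_def by (simp add: field_simps power2_eq_square power3_eq_cube)

lemma fSAdS_eq_cubic: "r \<noteq> 0 \<Longrightarrow> f r = (r - 2 * M - \<Lambda> * r ^ 3 / 3) / r"
  unfolding fSAdS_def by (simp add: field_simps power2_eq_square power3_eq_cube)

lemma ex1_horizon: "\<exists>!r. r > 0 \<and> f r = 0"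
proof -
  let ?p = "\<lambda>r::real. r - 2 * M - \<Lambda> * r ^ 3 / 3"
  have "?p 0 \<le> 0" "0 \<le> ?p (2 * M)"
    using cosmological_neg mass_pos by (simp_all add: mult_nonpos_nonneg mult_le_0_iff)
  then obtain r where r: "0 \<le> r" "r \<le> 2 * M" "?p r = 0"
    using IVT[of ?p 0 0 "2 * M"] mass_pos by (auto intro!: continuous_intros)
  with mass_pos have "r > 0" by (cases "r = 0") auto
  show ?thesis
  proof (rule ex1I[of _ r])
    show "r > 0 \<and> f r = 0" using \<open>r > 0\<close> r fSAdS_eq_cubic by simp
  next
    fix s assume "s > 0 \<and> f s = 0"
    then have "?p s = 0" using fSAdS_eq_cubic[of s] by simp
    then have "(s - r) * cubic_slope r s = 0" using cubic_diff[of s r] r(3) by linarith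
    then show "s = r" using cubic_slope_ge_1[of r s] by simp
  qed
qed

lemma horizon_pos: "rh > 0" and fSAdS_horizon: "f rh = 0"
  using theI'[OF ex1_horizon] unfolding horizon_def by simp_all

lemma fSAdS_factor: "s > 0 \<Longrightarrow> f s = (s - rh) * cubic_slope rh s / s"
  using fSAdS_eq_cubic[of s] fSAdS_eq_cubic[of rh] cubic_diff[of s rh] fSAdS_horizon horizon_pos
  by simp

lemma fSAdS_pos: "rh < s \<Longrightarrow> f s > 0"
  using fSAdS_factor[of s] horizon_pos cubic_slope_ge_1[of rh s] by simp

lemma fSAdS_ge_quadratic:
  assumes "rh < r" "r \<le> s"
  shows "f s \<ge> (- \<Lambda> / 3) * ((r - rh) / r) * s\<^sup>2"
proof -
  have "s > 0" "r > 0" using assms horizon_pos by linarith+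
  have "cubic_slope rh s = 1 - \<Lambda> / 3 * (rh * rh + rh * s) + (- \<Lambda> / 3) * s\<^sup>2"
    by (simp add: cubic_slope_def algebra_simps power2_eq_square)
  moreover have "\<Lambda> / 3 * (rh * rh + rh * s) \<le> 0"
    using cosmological_neg horizon_pos \<open>s > 0\<close> by (intro mult_nonpos_nonneg) auto
  ultimately have slope: "cubic_slope rh s \<ge> (- \<Lambda> / 3) * s\<^sup>2" by linarith
  have "rh * s / r \<ge> rh" using assms \<open>r > 0\<close> horizon_pos by (simp add: field_simps mult_left_mono)
  then have dist: "s - rh \<ge> (r - rh) / r * s" using \<open>r > 0\<close> by (simp add: field_simps)
  have "f s = (s - rh) * cubic_slope rh s / s" using fSAdS_factor \<open>s > 0\<close> by simp
  also have "\<dots> \<ge> ((r - rh) / r * s) * ((- \<Lambda> / 3) * s\<^sup>2) / s"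
    using dist slope assms \<open>s > 0\<close> \<open>r > 0\<close> cosmological_neg mult_nonpos_nonneg[of \<Lambda> "s\<^sup>2"]
    by (intro divide_right_mono mult_mono) auto
  also have "((r - rh) / r * s) * ((- \<Lambda> / 3) * s\<^sup>2) / s = (- \<Lambda> / 3) * ((r - rh) / r) * s\<^sup>2"
    using \<open>s > 0\<close> \<open>r > 0\<close> by (simp add: field_simps)
  finally show ?thesis .
qed

lemma fSAdS_le_linear:
  assumes "rh < s" "s \<le> rh + 1"
  shows "f s \<le> cubic_slope rh (rh + 1) / rh * (s - rh)"
proof -
  have "s > 0" using assms horizon_pos by linarith
  have "f s = (s - rh) * (cubic_slope rh s / s)" using fSAdS_factor \<open>s > 0\<close> by simp
  also have "\<dots> \<le> (s - rh) * (cubic_slope rh (rh + 1) / rh)"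
    using assms horizon_pos cubic_slope_ge_1[of rh "rh + 1"]
    by (intro mult_left_mono frac_le cubic_slope_mono) auto
  finally show ?thesis by (simp add: mult.commute)
qed

lemma continuous_on_inverse_fSAdS:
  assumes "rh < r" shows "continuous_on {r..} (\<lambda>s. 1 / f s)"
proof -
  have "f s \<noteq> 0 \<and> s \<noteq> 0" if "s \<in> {r..}" for s
    using fSAdS_pos[of s] that assms horizon_pos by auto
  then show ?thesis unfolding fSAdS_def by (auto intro!: continuous_intros)
qed

section \<open>The tortoise coordinate\<close>

abbreviation "tort \<equiv> tortoise M \<Lambda>"
abbreviation "rad \<equiv> rOf M \<Lambda>"

lemma inverse_fSAdS_le:
  assumes "rh < r" "r \<le> s"
  shows "1 / f s \<le> 1 / ((- \<Lambda> / 3) * ((r - rh) / r)) * (1 / s\<^sup>2)"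
proof -
  have c: "(- \<Lambda> / 3) * ((r - rh) / r) > 0"
    using cosmological_neg assms horizon_pos by (intro mult_pos_pos divide_pos_pos) auto
  have "s > 0" using assms horizon_pos by linarith
  then have "(- \<Lambda> / 3) * ((r - rh) / r) * s\<^sup>2 > 0" using mult_pos_pos[OF c, of "s\<^sup>2"] by simp
  then have "1 / f s \<le> 1 / ((- \<Lambda> / 3) * ((r - rh) / r) * s\<^sup>2)"
    using fSAdS_ge_quadratic[OF assms] by (intro frac_le) auto
  then show ?thesis by simp
qed

lemma inverse_fSAdS_integrable:
  assumes "rh < r" shows "(\<lambda>s. 1 / f s) integrable_on {r..}"
proof (rule measurable_bounded_by_integrable_imp_integrable_real)
  show "(\<lambda>s. 1 / f s) \<in> borel_measurable (lebesgue_on {r..})"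
    by (rule continuous_imp_measurable_on_sets_lebesgue[OF continuous_on_inverse_fSAdS[OF assms]]) simp
  show "(\<lambda>s. 1 / ((- \<Lambda> / 3) * ((r - rh) / r)) * (1 / s\<^sup>2)) integrable_on {r..}"
    using assms horizon_pos by (intro has_integral_integrable[OF has_integral_inverse_square_to_inf]) simp
  show "\<bar>1 / f s\<bar> \<le> 1 / ((- \<Lambda> / 3) * ((r - rh) / r)) * (1 / s\<^sup>2)" if "s \<in> {r..}" for s
    using inverse_fSAdS_le[OF assms, of s] fSAdS_pos[of s] that assms by auto
qed simp

lemma tortoise_diff:
  assumes "rh < a" "a \<le> b"
  shows "tort b - tort a = integral {a..b} (\<lambda>s. 1 / f s)"
proof -
  have "(\<lambda>s. 1 / f s) integrable_on {a..b}"
    using continuous_on_inverse_fSAdS[OF assms(1)]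
    by (intro integrable_continuous_interval) (auto intro: continuous_on_subset)
  moreover have "(\<lambda>s. 1 / f s) integrable_on {b..}"
    using assms by (intro inverse_fSAdS_integrable) auto
  moreover have "{a..b} \<union> {b..} = {a..}" "{a..b} \<inter> {b..} = {b}" using assms by auto
  ultimately have "integral {a..} (\<lambda>s. 1 / f s) =
      integral {a..b} (\<lambda>s. 1 / f s) + integral {b..} (\<lambda>s. 1 / f s)"
    by (metis (no_types) has_integral_Un integral_unique integrable_integral negligible_sing)
  then show ?thesis unfolding tortoise_def by simp
qed

lemma tortoise_has_derivative:
  assumes "rh < r"
  shows "(tort has_real_derivative 1 / f r) (at r)"
proof -
  define a where "a = (rh + r) / 2"
  have a: "rh < a" "a < r" using assms unfolding a_def by auto
  have "((\<lambda>y. integral {a..y} (\<lambda>s. 1 / f s)) has_real_derivative 1 / f r) (at r within {a..r + 1})"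
    using continuous_on_inverse_fSAdS[OF a(1)] a
    by (intro integral_has_real_derivative) (auto intro: continuous_on_subset)
  moreover have "at r within {a..r + 1} = at r"
    using a by (intro at_within_interior) auto
  ultimately have "((\<lambda>y. tort a + integral {a..y} (\<lambda>s. 1 / f s)) has_real_derivative 1 / f r) (at r)"
    using DERIV_add[OF DERIV_const] by fastforce
  then show ?thesis
  proof (rule has_field_derivative_transform_within_open[where S="{a<..}"])
    show "tort a + integral {a..y} (\<lambda>s. 1 / f s) = tort y" if "y \<in> {a<..}" for y
      using tortoise_diff[of a y] a that by simp
  qed (use a in auto)
qed

lemma isCont_tortoise: "rh < r \<Longrightarrow> isCont tort r"
  using tortoise_has_derivative DERIV_isCont by blast

lemma tortoise_strict_mono:
  assumes "rh < a" "a < b" shows "tort a < tort b"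
proof (rule DERIV_pos_imp_increasing[OF assms(2)])
  fix x assume "a \<le> x" "x \<le> b"
  then have "rh < x" using assms by linarith
  then show "\<exists>y. (tort has_real_derivative y) (at x) \<and> 0 < y"
    using tortoise_has_derivative fSAdS_pos by force
qed

lemma tortoise_less_iff: "rh < a \<Longrightarrow> rh < b \<Longrightarrow> tort a < tort b \<longleftrightarrow> a < b"
  using tortoise_strict_mono by (metis linorder_neq_iff order_less_asym)

lemma tortoise_eq_iff: "rh < a \<Longrightarrow> rh < b \<Longrightarrow> tort a = tort b \<longleftrightarrow> a = b"
  using tortoise_less_iff by (metis linorder_neq_iff)

lemma tortoise_nonpos: assumes "rh < r" shows "tort r \<le> 0"
proof -
  have "0 \<le> integral {r..} (\<lambda>s. 1 / f s)"
    using inverse_fSAdS_integrable[OF assms] fSAdS_pos assms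
    by (intro integral_nonneg) (auto simp: less_imp_le)
  then show ?thesis unfolding tortoise_def by simp
qed

lemma tortoise_neg: "rh < r \<Longrightarrow> tort r < 0"
  using tortoise_strict_mono[of r "r + 1"] tortoise_nonpos[of "r + 1"] by simp

lemma tortoise_tendsto_0: "(tort \<longlongrightarrow> 0) at_top"
proof (rule tendsto_sandwich[OF _ _ _ tendsto_const])
  define c where "c = 1 / ((- \<Lambda> / 3) * ((rh + 1 - rh) / (rh + 1)))"
  have lower: "tort r \<ge> - (c / r)" if "r \<ge> rh + 1" for r
  proof -
    have r: "rh < r" "r > 0" using that horizon_pos by linarith+
    have "integral {r..} (\<lambda>s. 1 / f s) \<le> integral {r..} (\<lambda>s. c * (1 / s\<^sup>2))"
      using inverse_fSAdS_integrable[OF r(1)] has_integral_inverse_square_to_inf[OF r(2), of c]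
        inverse_fSAdS_le[of "rh + 1"] that unfolding c_def
      by (intro integral_le) (auto simp: integrable_on_def)
    also have "\<dots> = c / r" using has_integral_inverse_square_to_inf[OF r(2)] by (rule integral_unique)
    finally show ?thesis unfolding tortoise_def by simp
  qed
  show "\<forall>\<^sub>F r in at_top. - (c / r) \<le> tort r"
    using eventually_ge_at_top[of "rh + 1"] by eventually_elim (rule lower)
  show "\<forall>\<^sub>F r in at_top. tort r \<le> 0"
    using eventually_gt_at_top[of rh] by eventually_elim (rule tortoise_nonpos)
  show "((\<lambda>r. - (c / r)) \<longlongrightarrow> 0) at_top" by real_asymp
qed

text \<open>The logarithmic divergence at the horizon, from \<open>f(s) \<le> K (s - r\<^sub>h)\<close>.\<close>
lemma tortoise_le_log:
  defines "K \<equiv> cubic_slope rh (rh + 1) / rh"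
  assumes "rh < r" "r < rh + 1"
  shows "tort r \<le> tort (rh + 1) + ln (r - rh) / K"
proof -
  have "K > 0" unfolding K_def using cubic_slope_ge_1[of rh "rh + 1"] horizon_pos by simp
  have "((\<lambda>s. 1 / (K * (s - rh))) has_integral (ln (rh + 1 - rh) / K - ln (r - rh) / K)) {r..rh + 1}"
    using \<open>K > 0\<close> assms(2,3)
    by (intro fundamental_theorem_of_calculus)
      (auto intro!: derivative_eq_intros simp flip: has_real_derivative_iff_has_vector_derivative
        simp: field_simps)
  then have log: "((\<lambda>s. 1 / (K * (s - rh))) has_integral - ln (r - rh) / K) {r..rh + 1}" by simp
  have "integral {r..rh + 1} (\<lambda>s. 1 / (K * (s - rh))) \<le> integral {r..rh + 1} (\<lambda>s. 1 / f s)"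
  proof (rule integral_le)
    show "(\<lambda>s. 1 / (K * (s - rh))) integrable_on {r..rh + 1}" using log by blast
    show "(\<lambda>s. 1 / f s) integrable_on {r..rh + 1}"
      using continuous_on_inverse_fSAdS[of r] assms
      by (intro integrable_continuous_interval) (auto intro: continuous_on_subset)
    show "1 / (K * (s - rh)) \<le> 1 / f s" if "s \<in> {r..rh + 1}" for s
    proof -
      have "rh < s" "s \<le> rh + 1" using that assms(2) by auto
      then have "0 < f s" "f s \<le> K * (s - rh)"
        using fSAdS_pos fSAdS_le_linear unfolding K_def by auto
      then show ?thesis by (intro frac_le) auto
    qed
  qed
  also have "\<dots> = tort (rh + 1) - tort r" using tortoise_diff[of r "rh + 1"] assms by simp
  finally show ?thesis using integral_unique[OF log] by simp
qed

lemma tortoise_unbounded_below: "\<exists>r. rh < r \<and> tort r < x"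
proof -
  define K where "K = cubic_slope rh (rh + 1) / rh"
  have "K > 0" unfolding K_def using cubic_slope_ge_1[of rh "rh + 1"] horizon_pos by simp
  define e where "e = min (1 / 2) (exp (K * (x - tort (rh + 1) - 1)))"
  have e: "0 < e" "e < 1" unfolding e_def by auto
  have "e \<le> exp (K * (x - tort (rh + 1) - 1))" unfolding e_def by simp
  then have "ln e \<le> K * (x - tort (rh + 1) - 1)"
    using e by (metis exp_gt_zero ln_exp ln_le_cancel_iff)
  then have "ln e / K \<le> x - tort (rh + 1) - 1"
    using \<open>K > 0\<close> by (simp add: pos_divide_le_eq mult.commute)
  then have "tort (rh + e) < x"
    using tortoise_le_log[of "rh + e"] e unfolding K_def by simp
  then show ?thesis using e by (intro exI[of _ "rh + e"]) auto
qed

lemma ex1_rOf: assumes "x < 0" shows "\<exists>!r. rh < r \<and> tort r = x"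
proof -
  obtain r1 where r1: "rh < r1" "tort r1 < x" using tortoise_unbounded_below by blast
  obtain N where N: "\<And>r. r \<ge> N \<Longrightarrow> tort r > x"
    using order_tendstoD(1)[OF tortoise_tendsto_0 assms] by (auto simp: eventually_at_top_linorder)
  have "tort (max N r1) > x" using N by simp
  then obtain r where r: "r1 \<le> r" "tort r = x"
    using IVT[of tort r1 x "max N r1"] r1 isCont_tortoise by force
  show ?thesis
  proof (rule ex1I[of _ r])
    show "rh < r \<and> tort r = x" using r r1 by auto
    show "s = r" if "rh < s \<and> tort s = x" for s
      using tortoise_eq_iff[of s r] that r r1 by simp
  qed
qed

lemma rOf_gt_horizon: "x < 0 \<Longrightarrow> rh < rad x"
  and tortoise_rOf: "x < 0 \<Longrightarrow> tort (rad x) = x"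
  using theI'[OF ex1_rOf] unfolding rOf_def by blast+

lemma rOf_pos: "x < 0 \<Longrightarrow> rad x > 0"
  using rOf_gt_horizon horizon_pos by force

lemma rOf_tortoise: assumes "rh < r" shows "rad (tort r) = r"
  unfolding rOf_def
  by (rule the_equality) (use assms tortoise_eq_iff in auto)

lemma isCont_rOf:
  assumes "x < 0" shows "isCont rad x"
proof -
  define d where "d = (rad x - rh) / 2"
  have d: "d > 0" using rOf_gt_horizon[OF assms] unfolding d_def by simp
  have near: "rh < z" if "\<bar>z - rad x\<bar> \<le> d" for z
    using rOf_gt_horizon[OF assms] that unfolding d_def by (simp add: abs_if split: if_split_asm)
  have "isCont rad (tort (rad x))"
  proof (rule isCont_inverse_function[where f=tort and g=rad, OF d])
    show "rad (tort z) = z" if "\<bar>z - rad x\<bar> \<le> d" for z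
      using rOf_tortoise near that by blast
    show "isCont tort z" if "\<bar>z - rad x\<bar> \<le> d" for z
      using isCont_tortoise near that by blast
  qed
  then show ?thesis using tortoise_rOf[OF assms] by simp
qed

lemma rOf_has_derivative:
  assumes "x < 0" shows "(rad has_real_derivative f (rad x)) (at x)"
proof -
  have "(rad has_real_derivative inverse (1 / f (rad x))) (at x)"
  proof (rule DERIV_inverse_function[where f=tort and a="x - 1" and b=0])
    show "(tort has_real_derivative 1 / f (rad x)) (at (rad x))"
      using tortoise_has_derivative rOf_gt_horizon assms by blast
    show "1 / f (rad x) \<noteq> 0" using fSAdS_pos rOf_gt_horizon assms by force
    show "tort (rad y) = y" if "x - 1 < y" "y < 0" for y using tortoise_rOf that by simp
  qed (use assms isCont_rOf in auto)
  then show ?thesis by simp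
qed

lemma filterlim_rOf_at_left_0: "filterlim rad at_top (at_left 0)"
  unfolding filterlim_at_top
proof
  fix Z :: real
  define B where "B = max Z (rh + 1)"
  have B: "rh < B" "Z \<le> B" unfolding B_def by auto
  have "\<forall>\<^sub>F x in at_left 0. x \<in> {tort B<..<0}"
    using tortoise_neg[OF B(1)] by (rule eventually_at_left_real)
  then show "\<forall>\<^sub>F x in at_left 0. Z \<le> rad x"
  proof eventually_elim
    case (elim x)
    then have "tort B < tort (rad x)" using tortoise_rOf by simp
    then have "B < rad x" using tortoise_less_iff B(1) rOf_gt_horizon elim by simp
    then show ?case using B by simp
  qed
qed

definition dfSAdS :: "real \<Rightarrow> real" where
  "dfSAdS r = 2 * M / r\<^sup>2 - 2 * \<Lambda> * r / 3"

lemma fSAdS_has_derivative: "r \<noteq> 0 \<Longrightarrow> (f has_real_derivative dfSAdS r) (at r)"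
  unfolding fSAdS_def dfSAdS_def
  by (auto intro!: derivative_eq_intros simp: field_simps power2_eq_square)

lemma mode_has_derivative:
  assumes "x < 0" and "(g has_real_derivative g' (rad x)) (at (rad x))"
  shows "((\<lambda>z. g (rad z) * exp (w * (z + t))) has_real_derivative
           (g' (rad x) * f (rad x) + w * g (rad x)) * exp (w * (x + t))) (at x)"
proof -
  have "((\<lambda>z. g (rad z)) has_real_derivative g' (rad x) * f (rad x)) (at x)"
    by (rule DERIV_chain2[OF assms(2) rOf_has_derivative[OF assms(1)]])
  moreover have "((\<lambda>z. exp (w * (z + t))) has_real_derivative w * exp (w * (x + t))) (at x)"
    by (auto intro!: derivative_eq_intros)
  ultimately show ?thesis
    by (rule DERIV_mult[THEN DERIV_cong]) (simp add: algebra_simps)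
qed

end

section \<open>The algebraically special mode\<close>

lemma fact_add_2_div_fact_diff_2:
  assumes "l \<ge> 2"
  shows "(fact (l + 2) / fact (l - 2) :: real) = (real l + 2) * (real l + 1) * real l * (real l - 1)"
proof -
  obtain k where k: "l = k + 2" using assms le_Suc_ex by (metis add.commute)
  then have "l + 2 = Suc (Suc (Suc (Suc k)))" "l - 2 = k" by auto
  then show ?thesis using k by (simp add: fact_Suc field_simps)
qed

text \<open>The radial equation \<open>f G'' + f' G' + 2w G' = V G\<close> for \<open>G(r) = r/(m r + 6M)\<close>, written out
  with \<open>w = m(m + 2)/(12M)\<close>.\<close>
lemma zerilli_identity:
  fixes r M L m :: real
  assumes "r \<noteq> 0" "M \<noteq> 0" "m * r + 6 * M \<noteq> 0"
  shows "12 * M * m / (m * r + 6 * M) ^ 3 * (1 - 2 * M / r - L * r\<^sup>2 / 3)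
      - 6 * M / (m * r + 6 * M)\<^sup>2 * (2 * M / r\<^sup>2 - 2 * L * r / 3)
      - 2 * (m * (m + 2) / (12 * M)) * (6 * M / (m * r + 6 * M)\<^sup>2)
      + ((m\<^sup>2 * (m + 2) - 24 * M\<^sup>2 * L) * r ^ 3 + 6 * m\<^sup>2 * M * r\<^sup>2 + 36 * m * M\<^sup>2 * r + 72 * M ^ 3)
        / (r ^ 3 * (6 * M + m * r)\<^sup>2) * (r / (m * r + 6 * M)) = 0"
    (is "?lhs = 0")
proof -
  define d where "d = m * r + 6 * M"
  define N where "N = (m\<^sup>2 * (m + 2) - 24 * M\<^sup>2 * L) * r ^ 3 + 6 * m\<^sup>2 * M * r\<^sup>2 + 36 * m * M\<^sup>2 * r + 72 * M ^ 3"
  have d: "d \<noteq> 0" "6 * M + m * r = d" using assms(3) unfolding d_def by argo+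
  have "?lhs = (12 * M * m * r * (3 * r - 6 * M - L * r ^ 3) - 6 * M * (6 * M - 2 * L * r ^ 3) * d
      - 3 * r\<^sup>2 * m * (m + 2) * d + 3 * N) / (3 * r\<^sup>2 * d ^ 3)"
    using assms(1,2) d unfolding d_def[symmetric] N_def[symmetric]
    by (simp add: field_simps power2_eq_square power3_eq_cube)
  also have "\<dots> = 0"
    unfolding d_def N_def by (simp add: algebra_simps power2_eq_square power3_eq_cube)
  finally show ?thesis .
qed

locale zerilli_mode = schwarzschild_ads +
  fixes l :: nat
  assumes l_ge_2: "l \<ge> 2"
begin

abbreviation "\<mu> \<equiv> mul l"
abbreviation "w \<equiv> wl M l"
abbreviation "\<phi> \<equiv> phiSol M \<Lambda> l"

lemma mul_pos: "\<mu> > 0"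
  unfolding mul_def using l_ge_2 by simp

lemma wl_eq: "w = \<mu> * (\<mu> + 2) / (12 * M)"
proof -
  have "\<mu> + 2 = real l * (real l + 1)" unfolding mul_def by (simp add: algebra_simps)
  then show ?thesis
    unfolding wl_def fact_add_2_div_fact_diff_2[OF l_ge_2] mul_def by (simp add: field_simps)
qed

lemma wl_pos: "w > 0"
  unfolding wl_eq using mul_pos mass_pos by simp

lemma denominator_pos: "r > 0 \<Longrightarrow> \<mu> * r + 6 * M > 0"
  using mul_pos mass_pos by (simp add: add_pos_pos)

definition profile :: "real \<Rightarrow> real" where
  "profile r = r / (\<mu> * r + 6 * M)"

definition dprofile :: "real \<Rightarrow> real" where
  "dprofile r = 6 * M / (\<mu> * r + 6 * M)\<^sup>2"

definition ddprofile :: "real \<Rightarrow> real" where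
  "ddprofile r = - 12 * M * \<mu> / (\<mu> * r + 6 * M) ^ 3"

text \<open>\<open>dmode (rad x) * exp (w * (x + t))\<close> is the \<open>r\<^sup>*\<close>-derivative of the mode.\<close>
definition dmode :: "real \<Rightarrow> real" where
  "dmode r = dprofile r * f r + w * profile r"

lemma phiSol_eq: "\<phi> t x = profile (rad x) * exp (w * (x + t))"
  unfolding phiSol_def profile_def mul_def by (simp add: algebra_simps)

lemma profile_has_derivative: "r > 0 \<Longrightarrow> (profile has_real_derivative dprofile r) (at r)"
  unfolding profile_def dprofile_def using denominator_pos[of r]
  by (auto intro!: derivative_eq_intros simp: field_simps power2_eq_square)

lemma dprofile_has_derivative: "r > 0 \<Longrightarrow> (dprofile has_real_derivative ddprofile r) (at r)"
  unfolding dprofile_def ddprofile_def using denominator_pos[of r]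
  by (auto intro!: derivative_eq_intros simp: divide_simps eval_nat_numeral)

lemma dmode_has_derivative:
  "r > 0 \<Longrightarrow> (dmode has_real_derivative
     ddprofile r * f r + dprofile r * dfSAdS r + w * dprofile r) (at r)"
  unfolding dmode_def[abs_def]
  by (rule DERIV_add[OF DERIV_mult DERIV_cmult, THEN DERIV_cong])
     (auto intro: dprofile_has_derivative fSAdS_has_derivative profile_has_derivative)

lemma profile_ode:
  assumes "r > 0"
  shows "ddprofile r * f r + dprofile r * dfSAdS r + 2 * w * dprofile r = VZ M \<Lambda> l r * profile r"
proof -
  have "real l * (real l + 1) = \<mu> + 2" unfolding mul_def by (simp add: algebra_simps)
  then have VZ: "VZ M \<Lambda> l r = ((\<mu>\<^sup>2 * (\<mu> + 2) - 24 * M\<^sup>2 * \<Lambda>) * r ^ 3 + 6 * \<mu>\<^sup>2 * M * r\<^sup>2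
      + 36 * \<mu> * M\<^sup>2 * r + 72 * M ^ 3) / (r ^ 3 * (6 * M + \<mu> * r)\<^sup>2)"
    unfolding VZ_def by simp
  have ddf: "ddprofile r * f r
      = - (12 * M * \<mu> / (\<mu> * r + 6 * M) ^ 3 * (1 - 2 * M / r - \<Lambda> * r\<^sup>2 / 3))"
    unfolding ddprofile_def fSAdS_def by simp
  have "r \<noteq> 0" "M \<noteq> 0" "\<mu> * r + 6 * M \<noteq> 0"
    using denominator_pos[OF assms] mass_pos assms by auto
  note zerilli_identity[OF this, where L=\<Lambda>]
  then show ?thesis
    unfolding VZ ddf dprofile_def dfSAdS_def profile_def wl_eq by linarith
qed

lemma phiSol_has_derivative_space:
  "x < 0 \<Longrightarrow> ((\<lambda>z. \<phi> t z) has_real_derivative dmode (rad x) * exp (w * (x + t))) (at x)"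
  unfolding phiSol_eq dmode_def
  by (intro mode_has_derivative profile_has_derivative rOf_pos)

lemma deriv_phiSol_space: "x < 0 \<Longrightarrow> deriv (\<lambda>z. \<phi> t z) x = dmode (rad x) * exp (w * (x + t))"
  by (rule DERIV_imp_deriv[OF phiSol_has_derivative_space])

lemma deriv_phiSol_space_has_derivative:
  assumes "x < 0"
  shows "(deriv (\<lambda>z. \<phi> t z) has_real_derivative
     ((ddprofile (rad x) * f (rad x) + dprofile (rad x) * dfSAdS (rad x) + w * dprofile (rad x))
       * f (rad x) + w * dmode (rad x)) * exp (w * (x + t))) (at x)"
proof (rule has_field_derivative_transform_within_open[where S="{..<0}"])
  show "((\<lambda>z. dmode (rad z) * exp (w * (z + t))) has_real_derivative
     ((ddprofile (rad x) * f (rad x) + dprofile (rad x) * dfSAdS (rad x) + w * dprofile (rad x))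
       * f (rad x) + w * dmode (rad x)) * exp (w * (x + t))) (at x)"
    using assms by (intro mode_has_derivative dmode_has_derivative rOf_pos)
qed (use assms deriv_phiSol_space in auto)

lemma deriv2_phiSol_space:
  "x < 0 \<Longrightarrow> deriv (deriv (\<lambda>z. \<phi> t z)) x =
     ((ddprofile (rad x) * f (rad x) + dprofile (rad x) * dfSAdS (rad x) + w * dprofile (rad x))
       * f (rad x) + w * dmode (rad x)) * exp (w * (x + t))"
  by (rule DERIV_imp_deriv[OF deriv_phiSol_space_has_derivative])

lemma phiSol_has_derivative_time:
  "((\<lambda>\<tau>. \<phi> \<tau> x) has_real_derivative w * \<phi> s x) (at s)"
  unfolding phiSol_eq by (auto intro!: derivative_eq_intros)

lemma deriv_phiSol_time: "deriv (\<lambda>\<tau>. \<phi> \<tau> x) = (\<lambda>s. w * \<phi> s x)"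
  using phiSol_has_derivative_time by (intro ext DERIV_imp_deriv)

lemma deriv_phiSol_time_has_derivative:
  "(deriv (\<lambda>\<tau>. \<phi> \<tau> x) has_real_derivative w\<^sup>2 * \<phi> t x) (at t)"
  unfolding deriv_phiSol_time power2_eq_square
  by (auto intro!: derivative_eq_intros phiSol_has_derivative_time)

lemma deriv2_phiSol_time: "deriv (deriv (\<lambda>\<tau>. \<phi> \<tau> x)) t = w\<^sup>2 * \<phi> t x"
  by (rule DERIV_imp_deriv[OF deriv_phiSol_time_has_derivative])

lemma zerilli_equation:
  assumes "x < 0"
  shows "deriv (deriv (\<lambda>\<tau>. \<phi> \<tau> x)) t - deriv (deriv (\<lambda>z. \<phi> t z)) x
           + f (rad x) * VZ M \<Lambda> l (rad x) * \<phi> t x = 0"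
proof -
  let ?r = "rad x"
  have "deriv (deriv (\<lambda>\<tau>. \<phi> \<tau> x)) t - deriv (deriv (\<lambda>z. \<phi> t z)) x
          + f ?r * VZ M \<Lambda> l ?r * \<phi> t x
      = f ?r * exp (w * (x + t)) * (VZ M \<Lambda> l ?r * profile ?r
          - (ddprofile ?r * f ?r + dprofile ?r * dfSAdS ?r + 2 * w * dprofile ?r))"
    by (simp only: deriv2_phiSol_time deriv2_phiSol_space[OF assms])
      (simp add: phiSol_eq dmode_def algebra_simps power2_eq_square)
  then show ?thesis using profile_ode[OF rOf_pos[OF assms]] by simp
qed

end

section \<open>Square integrability and boundary values\<close>

lemma has_integral_exp_lessThan_0:
  fixes a c :: real
  assumes "a > 0"
  shows "((\<lambda>x. c * exp (a * x)) has_integral c / a) {..<0}"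
proof -
  have "((\<lambda>x. exp (- a * x)) has_integral 1 / a) {0<..}"
    using has_integral_exp_minus_to_infinity[OF assms, of 0]
    by (subst has_integral_spike_set_eq[where T="{0..}"])
      (auto intro!: negligible_subset[OF negligible_sing[of "0::real"]])
  then have "(\<lambda>x. exp (a * - x)) absolutely_integrable_on {0<..}
      \<and> integral {0<..} (\<lambda>x. exp (a * - x)) = 1 / a"
    by (auto intro!: nonnegative_absolutely_integrable_1 simp: integrable_on_def integral_unique)
  then have "(\<lambda>x. exp (a * x)) absolutely_integrable_on {..<0}
      \<and> integral {..<0} (\<lambda>x. exp (a * x)) = 1 / a"
    by (subst (asm) has_absolute_integral_reflect_real[where B="{..<0}"]) auto
  then have "((\<lambda>x. exp (a * x)) has_integral 1 / a) {..<0}"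
    using set_lebesgue_integral_eq_integral(1) by (metis integrable_integral)
  from has_integral_mult_right[OF this, of c] show ?thesis by simp
qed

context zerilli_mode begin

lemma profile_pos: "r > 0 \<Longrightarrow> profile r > 0"
  unfolding profile_def using denominator_pos by simp

lemma profile_le: "r > 0 \<Longrightarrow> profile r \<le> 1 / \<mu>"
  unfolding profile_def using mul_pos mass_pos denominator_pos[of r]
  by (simp add: divide_simps)

lemma profile_mono: "0 < a \<Longrightarrow> a \<le> b \<Longrightarrow> profile a \<le> profile b"
  unfolding profile_def using denominator_pos[of a] denominator_pos[of b] mass_pos
  by (simp add: divide_simps algebra_simps)

lemma continuous_on_phiSol: "continuous_on {..<0} (\<lambda>x. \<phi> t x)"
  by (rule continuous_at_imp_continuous_on) (use phiSol_has_derivative_space DERIV_isCont in blast)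

lemma phiSol_sq: "(\<phi> t x)\<^sup>2 = (exp (w * t))\<^sup>2 * (\<phi> 0 x)\<^sup>2"
  unfolding phiSol_eq by (simp add: distrib_left exp_add power_mult_distrib algebra_simps)

lemma phiSol0_sq: "(\<phi> 0 x)\<^sup>2 = (profile (rad x))\<^sup>2 * exp ((2 * w) * x)"
  unfolding phiSol_eq by (simp add: power_mult_distrib power2_eq_square flip: exp_add)

lemma integrable_phiSol0_sq: "(\<lambda>x. (\<phi> 0 x)\<^sup>2) integrable_on {..<0}"
proof (rule measurable_bounded_by_integrable_imp_integrable_real)
  show "(\<lambda>x. (\<phi> 0 x)\<^sup>2) \<in> borel_measurable (lebesgue_on {..<0})"
    by (intro continuous_imp_measurable_on_sets_lebesgue continuous_on_power continuous_on_phiSol) simp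
  show "(\<lambda>x. (1 / \<mu>)\<^sup>2 * exp ((2 * w) * x)) integrable_on {..<0}"
    using wl_pos by (intro has_integral_integrable[OF has_integral_exp_lessThan_0]) simp
  show "\<bar>(\<phi> 0 x)\<^sup>2\<bar> \<le> (1 / \<mu>)\<^sup>2 * exp ((2 * w) * x)" if "x \<in> {..<0}" for x
  proof -
    have "0 < profile (rad x)" "profile (rad x) \<le> 1 / \<mu>"
      using that profile_pos profile_le rOf_pos by auto
    then have "(profile (rad x))\<^sup>2 \<le> (1 / \<mu>)\<^sup>2" by (intro power_mono) auto
    then show ?thesis unfolding phiSol0_sq by (simp add: mult_right_mono)
  qed
qed simp

lemma integrable_phiSol_sq: "(\<lambda>x. (\<phi> t x)\<^sup>2) integrable_on {..<0}"
  unfolding phiSol_sq[of t] by (intro integrable_on_mult_right integrable_phiSol0_sq)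

lemma integral_phiSol0_sq_pos: "integral {..<0} (\<lambda>x. (\<phi> 0 x)\<^sup>2) > 0"
proof -
  have "0 < (profile rh)\<^sup>2 / (2 * w)"
    using profile_pos[OF horizon_pos] wl_pos by simp
  also have "\<dots> = integral {..<0} (\<lambda>x. (profile rh)\<^sup>2 * exp ((2 * w) * x))"
    using wl_pos by (intro integral_unique[symmetric] has_integral_exp_lessThan_0) simp
  also have "\<dots> \<le> integral {..<0} (\<lambda>x. (\<phi> 0 x)\<^sup>2)"
  proof (rule integral_le)
    show "(\<lambda>x. (profile rh)\<^sup>2 * exp ((2 * w) * x)) integrable_on {..<0}"
        using wl_pos by (intro has_integral_integrable[OF has_integral_exp_lessThan_0]) simp
    show "(profile rh)\<^sup>2 * exp ((2 * w) * x) \<le> (\<phi> 0 x)\<^sup>2" if "x \<in> {..<0}" for x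
    proof -
      have "0 < profile rh" "profile rh \<le> profile (rad x)"
        using that rOf_gt_horizon[of x] profile_mono[OF horizon_pos, of "rad x"] profile_pos[OF horizon_pos]
        by auto
      then have "(profile rh)\<^sup>2 \<le> (profile (rad x))\<^sup>2" by (intro power_mono) auto
      then show ?thesis unfolding phiSol0_sq by (simp add: mult_right_mono)
    qed
  qed (rule integrable_phiSol0_sq)
  finally show ?thesis .
qed

lemma L2_norm_phiSol:
  "sqrt (integral {..<0} (\<lambda>x. (\<phi> t x)\<^sup>2)) = sqrt (integral {..<0} (\<lambda>x. (\<phi> 0 x)\<^sup>2)) * exp (w * t)"
  unfolding phiSol_sq[of t] integral_mult_right by (simp add: real_sqrt_mult)

lemma L2_norm_phiSol_exponential_growth:
  "\<exists>c>0. \<exists>a>0. \<forall>t. sqrt (integral {..<0} (\<lambda>x. (\<phi> t x)\<^sup>2)) = c * exp (a * t)"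
  using L2_norm_phiSol integral_phiSol0_sq_pos wl_pos real_sqrt_gt_zero by blast

lemma borel_measurable_phiSol: "set_borel_measurable lborel {..<0} (\<lambda>x. \<phi> t x)"
  unfolding set_borel_measurable_def measurable_lborel2
  by (rule borel_measurable_continuous_on_indicator[OF _ continuous_on_phiSol]) simp

lemma profile_tendsto: "(profile \<longlongrightarrow> 1 / \<mu>) at_top"
proof -
  have "((\<lambda>r. r / (\<mu> * r + 6 * M)) \<longlongrightarrow> inverse \<mu>) at_top"
    using mul_pos mass_pos by real_asymp
  then show ?thesis unfolding profile_def[abs_def] by (simp add: inverse_eq_divide)
qed

lemma dmode_tendsto: "(dmode \<longlongrightarrow> w / \<mu> - 2 * M * \<Lambda> / \<mu>\<^sup>2) at_top"
proof -
  have "((\<lambda>r. 6 * M / (\<mu> * r + 6 * M)\<^sup>2 * (1 - 2 * M / r - \<Lambda> * r\<^sup>2 / 3) + w * (r / (\<mu> * r + 6 * M)))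
      \<longlongrightarrow> w * inverse \<mu> - 2 * (\<Lambda> * (M * inverse (\<mu>\<^sup>2)))) at_top"
    using mul_pos mass_pos by real_asymp
  then show ?thesis
    unfolding dmode_def[abs_def] dprofile_def profile_def fSAdS_def by (simp add: field_simps)
qed

lemma phiSol_tendsto_boundary: "((\<lambda>x. \<phi> t x) \<longlongrightarrow> exp (w * t) / \<mu>) (at_left 0)"
proof -
  have "((\<lambda>x. profile (rad x) * exp (w * (x + t))) \<longlongrightarrow> 1 / \<mu> * exp (w * (0 + t))) (at_left 0)"
    by (intro tendsto_mult filterlim_compose[OF profile_tendsto filterlim_rOf_at_left_0] tendsto_intros)
  then show ?thesis unfolding phiSol_eq by simp
qed

lemma deriv_phiSol_tendsto_boundary:
  "(deriv (\<lambda>x. \<phi> t x) \<longlongrightarrow> (w / \<mu> - 2 * M * \<Lambda> / \<mu>\<^sup>2) * exp (w * t)) (at_left 0)"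
proof -
  have "((\<lambda>x. dmode (rad x) * exp (w * (x + t))) \<longlongrightarrow>
      (w / \<mu> - 2 * M * \<Lambda> / \<mu>\<^sup>2) * exp (w * (0 + t))) (at_left 0)"
    by (intro tendsto_mult filterlim_compose[OF dmode_tendsto filterlim_rOf_at_left_0] tendsto_intros)
  moreover have "\<forall>\<^sub>F x in at_left (0::real). x \<in> {-1<..<0}"
    by (rule eventually_at_left_real) simp
  then have "\<forall>\<^sub>F x in at_left 0. dmode (rad x) * exp (w * (x + t)) = deriv (\<lambda>x. \<phi> t x) x"
    by eventually_elim (simp add: deriv_phiSol_space)
  ultimately show ?thesis by (simp add: Lim_transform_eventually)
qed


lemma phiSol_robin_boundary:
  "\<exists>b db. ((\<lambda>x. \<phi> t x) \<longlongrightarrow> b) (at_left 0) \<and> (deriv (\<lambda>x. \<phi> t x) \<longlongrightarrow> db) (at_left 0)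
     \<and> db = (w - 2 * M * \<Lambda> / \<mu>) * b"
proof (intro exI conjI)
  show "(w / \<mu> - 2 * M * \<Lambda> / \<mu>\<^sup>2) * exp (w * t) = (w - 2 * M * \<Lambda> / \<mu>) * (exp (w * t) / \<mu>)"
    using mul_pos by (simp add: field_simps power2_eq_square)
qed (rule phiSol_tendsto_boundary deriv_phiSol_tendsto_boundary)+

end

theorem mainTheorem10:
  fixes M \<Lambda> \<alpha> :: real and l :: nat
  assumes "\<Lambda> < 0" and "M > 0" and "l \<ge> 2"
    and "-pi \<le> \<alpha>" and "\<alpha> \<le> pi"
    and "tan \<alpha> = wl M l - 2 * M * \<Lambda> / ((real l - 1) * (real l + 2))"
  shows
    \<comment> \<open>Zerilli equation on the whole domain\<close>
    "(\<forall>t x. x < 0 \<longrightarrow>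
        (\<forall>y<0. ((\<lambda>z. phiSol M \<Lambda> l t z) has_real_derivative
                   deriv (\<lambda>z. phiSol M \<Lambda> l t z) y) (at y))
      \<and> ((deriv (\<lambda>z. phiSol M \<Lambda> l t z)) has_real_derivative
           deriv (deriv (\<lambda>z. phiSol M \<Lambda> l t z)) x) (at x)
      \<and> (\<forall>s. ((\<lambda>\<tau>. phiSol M \<Lambda> l \<tau> x) has_real_derivative
                   deriv (\<lambda>\<tau>. phiSol M \<Lambda> l \<tau> x) s) (at s))
      \<and> ((deriv (\<lambda>\<tau>. phiSol M \<Lambda> l \<tau> x)) has_real_derivative
           deriv (deriv (\<lambda>\<tau>. phiSol M \<Lambda> l \<tau> x)) t) (at t)
      \<and> deriv (deriv (\<lambda>\<tau>. phiSol M \<Lambda> l \<tau> x)) t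
          - deriv (deriv (\<lambda>z. phiSol M \<Lambda> l t z)) x
          + fSAdS M \<Lambda> (rOf M \<Lambda> x) * VZ M \<Lambda> l (rOf M \<Lambda> x) * phiSol M \<Lambda> l t x = 0)
   \<and> \<comment> \<open>L^2((-infinity,0), dr*) for every t\<close>
    (\<forall>t. set_borel_measurable lborel {..<0} (\<lambda>x. phiSol M \<Lambda> l t x)
        \<and> (\<lambda>x. (phiSol M \<Lambda> l t x)^2) integrable_on {..<0})
   \<and> \<comment> \<open>exponential growth in t of the L^2 norm\<close>
    (\<exists>c>0. \<exists>a>0. \<forall>t.
        sqrt (integral {..<0} (\<lambda>x. (phiSol M \<Lambda> l t x)^2)) = c * exp (a * t))
   \<and> \<comment> \<open>Robin boundary condition at r* = 0\<close>
    (\<forall>t. \<exists>b db. ((\<lambda>x. phiSol M \<Lambda> l t x) \<longlongrightarrow> b) (at_left 0)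
        \<and> (deriv (\<lambda>x. phiSol M \<Lambda> l t x) \<longlongrightarrow> db) (at_left 0)
        \<and> db = tan \<alpha> * b)"
proof -
  interpret zerilli_mode M \<Lambda> l using assms by unfold_locales auto
  have "tan \<alpha> = w - 2 * M * \<Lambda> / \<mu>" using assms(6) unfolding mul_def by simp
  then show ?thesis
    using phiSol_has_derivative_space deriv_phiSol_space deriv_phiSol_space_has_derivative
      deriv2_phiSol_space phiSol_has_derivative_time deriv_phiSol_time_has_derivative
      deriv_phiSol_time deriv2_phiSol_time zerilli_equation borel_measurable_phiSol integrable_phiSol_sq
      L2_norm_phiSol_exponential_growth phiSol_robin_boundary
    by simp
qed

end
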